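(* If $G$ is a minimally $2$-connected graph, then $\chi_s'(G) \le 4\Delta(G) - 3$.
   Context: All graphs are finite and simple; $\Delta(G)$ is the maximum degree. A $2$-connected graph $G$ is minimally $2$-connected if $G-e$ is not $2$-connected for every edge $e$ of $G$. A strong edge coloring of $G$ is an assignment of colors to the edges of $G$ such that every path with three edges receives three distinct colors; equivalently, any two distinct edges that share an endpoint, or whose endpoints are joined by an edge, receive different colors. The strong chromatic index $\chi_s'(G)$ is the minimum number of colors in a strong edge coloring of $G$. *)

theory Defs
  imports Main
begin

definition simple_graph :: "'a set \<Rightarrow> 'a set set \<Rightarrow> bool" where
  "simple_graph V E \<longleftrightarrow> finite V \<and> (\<forall>e\<in>E. \<exists>u v. e = {u, v} \<and> u \<noteq> v \<and> u \<in> V \<and> v \<in> V)"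

definition degree :: "'a set set \<Rightarrow> 'a \<Rightarrow> nat" where
  "degree E v = card {e\<in>E. v \<in> e}"

definition max_degree :: "'a set \<Rightarrow> 'a set set \<Rightarrow> nat" where
  "max_degree V E = Max (degree E ` V)"

definition adj_rel :: "'a set set \<Rightarrow> ('a \<times> 'a) set" where
  "adj_rel E = {(x, y). {x, y} \<in> E}"

definition connected_graph :: "'a set \<Rightarrow> 'a set set \<Rightarrow> bool" where
  "connected_graph V E \<longleftrightarrow> V \<noteq> {} \<and> (\<forall>u\<in>V. \<forall>w\<in>V. (u, w) \<in> (adj_rel E)\<^sup>*)"

definition delete_vertex :: "'a set \<Rightarrow> 'a set set \<Rightarrow> 'a \<Rightarrow> 'a set \<times> 'a set set" where
  "delete_vertex V E v = (V - {v}, {e\<in>E. v \<notin> e})"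

definition two_connected :: "'a set \<Rightarrow> 'a set set \<Rightarrow> bool" where
  "two_connected V E \<longleftrightarrow> card V > 2 \<and> connected_graph V E \<and>
     (\<forall>v\<in>V. case_prod connected_graph (delete_vertex V E v))"

definition minimally_two_connected :: "'a set \<Rightarrow> 'a set set \<Rightarrow> bool" where
  "minimally_two_connected V E \<longleftrightarrow> two_connected V E \<and> (\<forall>e\<in>E. \<not> two_connected V (E - {e}))"

definition strong_edge_coloring :: "'a set set \<Rightarrow> ('a set \<Rightarrow> nat) \<Rightarrow> bool" where
  "strong_edge_coloring E c \<longleftrightarrow>
     (\<forall>e\<in>E. \<forall>f\<in>E. e \<noteq> f \<and> (e \<inter> f \<noteq> {} \<or> (\<exists>u\<in>e. \<exists>v\<in>f. {u, v} \<in> E)) \<longrightarrow> c e \<noteq> c f)"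

definition strong_chromatic_index :: "'a set set \<Rightarrow> nat" where
  "strong_chromatic_index E = (LEAST k. \<exists>c. strong_edge_coloring E c \<and> c ` E \<subseteq> {..<k})"

end

theory Submission
  imports Defs
begin

text \<open>Every edge \<open>uv\<close> of a minimally 2-connected graph is critical: some vertex \<open>w\<close> separates
  \<open>u\<close> from \<open>v\<close> in \<open>G - w - uv\<close>. Hence the vertices of degree at least 3 induce a forest: a
  smallest side of such a separation whose bridge joins two of them could always be shrunk. So
  these vertices can be ordered so that each has at most one earlier neighbour among them; the
  vertices of degree 2 are put last. Colouring the edges greedily by the rank of their earlier
  endpoint, every edge has at most \<open>4\<Delta> - 4\<close> conflicting edges coloured before it: at most
  \<open>\<Delta>\<close> through an endpoint of degree 2, and otherwise \<open>3\<Delta> - 4\<close> through the earlier endpoint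
  and \<open>\<Delta>\<close> through the later one.\<close>

definition strongly_conflicting :: "'a set set \<Rightarrow> 'a set \<Rightarrow> 'a set \<Rightarrow> bool" where
  "strongly_conflicting E e f \<longleftrightarrow> e \<noteq> f \<and> (e \<inter> f \<noteq> {} \<or> (\<exists>u\<in>e. \<exists>v\<in>f. {u, v} \<in> E))"

lemma strongly_conflicting_sym: "strongly_conflicting E e f \<Longrightarrow> strongly_conflicting E f e"
  unfolding strongly_conflicting_def by (metis inf_commute insert_commute)

lemma strong_edge_coloring_iff:
  "strong_edge_coloring E c \<longleftrightarrow> (\<forall>e\<in>E. \<forall>f\<in>E. strongly_conflicting E e f \<longrightarrow> c e \<noteq> c f)"
  unfolding strong_edge_coloring_def strongly_conflicting_def ..

lemma strong_chromatic_index_le: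
  assumes "strong_edge_coloring E c" and "c ` E \<subseteq> {..<k}"
  shows "strong_chromatic_index E \<le> k"
  unfolding strong_chromatic_index_def by (rule Least_le) (use assms in blast)

section \<open>Greedy colourings and degenerate orderings\<close>

lemma greedy_coloring_by_rank:
  fixes r :: "'b \<Rightarrow> nat"
  assumes "finite S"
    and sym: "\<And>x y. R x y \<Longrightarrow> R y x" and irrefl: "\<And>x. \<not> R x x"
    and bound: "\<And>x. x \<in> S \<Longrightarrow> card {y\<in>S. R x y \<and> r y \<le> r x} \<le> K"
  shows "\<exists>c. (\<forall>x\<in>S. \<forall>y\<in>S. R x y \<longrightarrow> c x \<noteq> c y) \<and> c ` S \<subseteq> {..<Suc K}"
proof -
  have "\<exists>c. (\<forall>x\<in>F. \<forall>y\<in>F. R x y \<longrightarrow> c x \<noteq> c y) \<and> c ` F \<subseteq> {..<Suc K}" if "F \<subseteq> S" for F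
  proof -
    from that have "finite F" using \<open>finite S\<close> finite_subset by blast
    then show ?thesis using that
    proof (induction F rule: finite_ranking_induct[where f = r])
      case empty
      then show ?case by simp
    next
      case (insert x F)
      then obtain c where c: "\<forall>x\<in>F. \<forall>y\<in>F. R x y \<longrightarrow> c x \<noteq> c y" "c ` F \<subseteq> {..<Suc K}"
        by auto
      let ?used = "c ` {y\<in>F. R x y}"
      have "card ?used \<le> card {y\<in>F. R x y}"
        using insert.hyps(1) by (simp add: card_image_le)
      also have "\<dots> \<le> card {y\<in>S. R x y \<and> r y \<le> r x}"
        using insert by (intro card_mono) (auto simp: \<open>finite S\<close>)
      also have "\<dots> \<le> K"
        using bound insert.prems by auto
      finally have "card ?used < card {..<Suc K}"
        by simp
      then have "\<not> {..<Suc K} \<subseteq> ?used"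
        using insert.hyps(1) card_mono[of ?used "{..<Suc K}"] by auto
      then obtain col where col: "col < Suc K" "col \<notin> ?used"
        by blast
      have "(c(x := col)) y \<noteq> (c(x := col)) z"
        if "y \<in> insert x F" "z \<in> insert x F" "R y z" for y z
      proof (cases "y = x"; cases "z = x")
        assume "y = x" "z \<noteq> x"
        then show ?thesis using that col by auto
      next
        assume "y \<noteq> x" "z = x"
        then show ?thesis using that col sym by auto
      next
        assume "y \<noteq> x" "z \<noteq> x"
        then show ?thesis using that c by auto
      qed (use that irrefl in auto)
      then have "\<forall>y\<in>insert x F. \<forall>z\<in>insert x F. R y z \<longrightarrow> (c(x := col)) y \<noteq> (c(x := col)) z"
        by blast
      moreover have "(c(x := col)) ` insert x F \<subseteq> {..<Suc K}"
        using c col insert.hyps by auto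
      ultimately show ?case
        by blast
    qed
  qed
  then show ?thesis
    by blast
qed

lemma degenerate_ordering:
  fixes N :: "'a \<Rightarrow> 'a set"
  assumes "finite X" and "\<And>Y. Y \<subseteq> X \<Longrightarrow> Y \<noteq> {} \<Longrightarrow> \<exists>y\<in>Y. card (N y \<inter> Y) \<le> k"
  shows "\<exists>idx::'a \<Rightarrow> nat. inj_on idx X \<and> idx ` X \<subseteq> {..<card X} \<and>
           (\<forall>x\<in>X. card {y \<in> N x \<inter> X. idx y < idx x} \<le> k)"
  using assms
proof (induction "card X" arbitrary: X)
  case 0
  then show ?case by auto
next
  case (Suc n)
  have "X \<noteq> {}"
    using Suc.hyps(2) by (intro notI) simp
  then obtain y where y: "y \<in> X" "card (N y \<inter> X) \<le> k"
    using Suc.prems(2) by blast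
  have n: "card (X - {y}) = n"
    using Suc.hyps(2) y(1) by simp
  obtain idx0 :: "'a \<Rightarrow> nat" where idx0: "inj_on idx0 (X - {y})" "idx0 ` (X - {y}) \<subseteq> {..<n}"
    "\<forall>x\<in>X - {y}. card {z \<in> N x \<inter> (X - {y}). idx0 z < idx0 x} \<le> k"
  proof -
    have "finite (X - {y})"
      using Suc.prems(1) by simp
    moreover have "\<exists>z\<in>Y. card (N z \<inter> Y) \<le> k" if "Y \<subseteq> X - {y}" "Y \<noteq> {}" for Y
      using Suc.prems(2) that by blast
    ultimately have "\<exists>idx::'a \<Rightarrow> nat. inj_on idx (X - {y}) \<and> idx ` (X - {y}) \<subseteq> {..<card (X - {y})} \<and>
           (\<forall>x\<in>X - {y}. card {z \<in> N x \<inter> (X - {y}). idx z < idx x} \<le> k)"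
      by (rule Suc.hyps(1)[OF n[symmetric]])
    then show ?thesis
      using that unfolding n by blast
  qed
  define idx where "idx = idx0(y := n)"
  have "inj_on idx X"
  proof -
    have "inj_on idx (X - {y})"
      using idx0(1) unfolding idx_def by (simp add: inj_on_def)
    moreover have "idx y \<notin> idx ` (X - {y})"
      using idx0(2) unfolding idx_def by auto
    ultimately have "inj_on idx (insert y (X - {y}))"
      unfolding inj_on_insert by simp
    with y(1) show ?thesis
      by (simp add: insert_absorb)
  qed
  moreover have "idx ` X \<subseteq> {..<card X}"
    using idx0(2) Suc.hyps(2) unfolding idx_def by auto
  moreover have "card {z \<in> N x \<inter> X. idx z < idx x} \<le> k" if x: "x \<in> X" for x
  proof (cases "x = y")
    case True
    have "card {z \<in> N x \<inter> X. idx z < idx x} \<le> card (N y \<inter> X)"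
      using True Suc.prems(1) by (intro card_mono) auto
    with y(2) show ?thesis
      by simp
  next
    case False
    then have "idx0 x < n"
      using idx0(2) x by auto
    then have "{z \<in> N x \<inter> X. idx z < idx x} = {z \<in> N x \<inter> (X - {y}). idx0 z < idx0 x}"
      using False unfolding idx_def by auto
    with idx0(3) x False show ?thesis
      by simp
  qed
  ultimately show ?case
    by blast
qed

section \<open>Connectivity after deleting vertices and edges\<close>

lemma rtrancl_leaves_set:
  assumes "(x, y) \<in> R\<^sup>*" and "x \<in> S" and "y \<notin> S"
  shows "\<exists>a b. (x, a) \<in> R\<^sup>* \<and> (a, b) \<in> R \<and> a \<in> S \<and> b \<notin> S"
  using assms by (induction rule: rtrancl_induct) blast+

text \<open>Adjacency in \<open>G - W - f\<close>; every edge has two ends, so \<open>f = {}\<close> deletes no edge.\<close>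
definition adj_avoiding :: "'a set set \<Rightarrow> 'a set \<Rightarrow> 'a set \<Rightarrow> ('a \<times> 'a) set" where
  "adj_avoiding E W f = {(x, y). {x, y} \<in> E \<and> x \<notin> W \<and> y \<notin> W \<and> {x, y} \<noteq> f}"

lemma sym_adj_avoiding: "sym (adj_avoiding E W f)"
  unfolding adj_avoiding_def sym_def by (auto simp: insert_commute)

lemma adj_avoiding_rtrancl_sym:
  "(x, y) \<in> (adj_avoiding E W f)\<^sup>* \<Longrightarrow> (y, x) \<in> (adj_avoiding E W f)\<^sup>*"
  by (meson sym_adj_avoiding sym_rtrancl symD)

lemma adj_avoiding_rtrancl_mono:
  assumes "W \<subseteq> W'" and "(x, y) \<in> (adj_avoiding E W' f)\<^sup>*"
  shows "(x, y) \<in> (adj_avoiding E W f)\<^sup>*"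
proof -
  have "adj_avoiding E W' f \<subseteq> adj_avoiding E W f"
    using assms(1) unfolding adj_avoiding_def by auto
  with assms(2) show ?thesis
    using rtrancl_mono by blast
qed

lemma adj_avoiding_rtrancl_outside:
  assumes "(x, y) \<in> (adj_avoiding E W f)\<^sup>*" and "x \<notin> W"
  shows "y \<notin> W"
  using assms by (induction rule: rtrancl_induct) (auto simp: adj_avoiding_def)

lemma adj_avoiding_rtrancl_delete_edge:
  assumes "(x, y) \<in> (adj_avoiding E W {})\<^sup>*" and "(x, y) \<notin> (adj_avoiding E W {u, v})\<^sup>*"
  shows "(u, v) \<notin> (adj_avoiding E W {u, v})\<^sup>*"
proof
  assume uv: "(u, v) \<in> (adj_avoiding E W {u, v})\<^sup>*"
  from assms(1) have "(x, y) \<in> (adj_avoiding E W {u, v})\<^sup>*"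
  proof (induction rule: rtrancl_induct)
    case base
    then show ?case by simp
  next
    case (step y z)
    show ?case
    proof (cases "{y, z} = {u, v}")
      case True
      then have "(y, z) \<in> (adj_avoiding E W {u, v})\<^sup>*"
        using uv adj_avoiding_rtrancl_sym by (auto simp: doubleton_eq_iff)
      with step.IH show ?thesis
        by (rule rtrancl_trans)
    next
      case False
      then have "(y, z) \<in> adj_avoiding E W {u, v}"
        using step.hyps(2) unfolding adj_avoiding_def by auto
      with step.IH show ?thesis
        by (rule rtrancl_into_rtrancl)
    qed
  qed
  with assms(2) show False ..
qed

lemma adj_avoiding_rtrancl_delete_edge_cases:
  assumes "(x, y) \<in> (adj_avoiding E W {})\<^sup>*"
  shows "(x, y) \<in> (adj_avoiding E W {u, v})\<^sup>* \<or> (u, y) \<in> (adj_avoiding E W {u, v})\<^sup>* \<or>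
    (v, y) \<in> (adj_avoiding E W {u, v})\<^sup>*"
  using assms
proof (induction rule: rtrancl_induct)
  case base
  then show ?case by simp
next
  case (step y z)
  show ?case
  proof (cases "{y, z} = {u, v}")
    case True
    then show ?thesis by (auto simp: doubleton_eq_iff)
  next
    case False
    then have "(y, z) \<in> adj_avoiding E W {u, v}"
      using step.hyps(2) unfolding adj_avoiding_def by auto
    with step.IH show ?thesis
      by (meson rtrancl_into_rtrancl)
  qed
qed

locale two_connected_graph =
  fixes V :: "'a set" and E :: "'a set set"
  assumes simple: "simple_graph V E" and two_conn: "two_connected V E"
begin

definition nbhd :: "'a \<Rightarrow> 'a set" where
  "nbhd x = {y. {x, y} \<in> E}"

lemma finite_V: "finite V"
  using simple unfolding simple_graph_def by blast

lemma card_V_gt_2: "card V > 2"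
  using two_conn unfolding two_connected_def by blast

lemma edgeE:
  assumes "e \<in> E"
  obtains u v where "e = {u, v}" "u \<noteq> v" "u \<in> V" "v \<in> V"
  using simple assms unfolding simple_graph_def by blast

lemma edge_vertices:
  assumes "{x, y} \<in> E"
  shows "x \<in> V" "y \<in> V" "x \<noteq> y"
  using assms by (auto elim!: edgeE simp: doubleton_eq_iff)

lemma finite_E: "finite E"
proof -
  have "E \<subseteq> Pow V"
    by (auto elim!: edgeE)
  then show ?thesis
    using finite_V finite_subset by blast
qed

lemma ex_vertex_not_in_pair: "\<exists>w\<in>V. w \<noteq> x \<and> w \<noteq> y"
proof -
  have "card {x, y} \<le> 2"
    by (cases "x = y") auto
  then have "card {x, y} < card V"
    using card_V_gt_2 by linarith
  then have "\<not> V \<subseteq> {x, y}"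
    by (meson card_mono finite.emptyI finite.insertI not_le)
  then show ?thesis
    by blast
qed

lemma reachable_in_graph:
  assumes "x \<in> V" "y \<in> V"
  shows "(x, y) \<in> (adj_avoiding E {} {})\<^sup>*"
proof -
  have "adj_rel E = adj_avoiding E {} {}"
    unfolding adj_rel_def adj_avoiding_def by auto
  with assms two_conn show ?thesis
    unfolding two_connected_def connected_graph_def by auto
qed

lemma reachable_without_vertex:
  assumes "w \<in> V" "x \<in> V - {w}" "y \<in> V - {w}"
  shows "(x, y) \<in> (adj_avoiding E {w} {})\<^sup>*"
proof -
  have "connected_graph (V - {w}) {e\<in>E. w \<notin> e}"
    using two_conn assms(1) unfolding two_connected_def delete_vertex_def by auto
  moreover have "adj_rel {e\<in>E. w \<notin> e} = adj_avoiding E {w} {}"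
    unfolding adj_rel_def adj_avoiding_def by auto
  ultimately show ?thesis
    using assms unfolding connected_graph_def by auto
qed

lemma nbhd_subset_V: "nbhd x \<subseteq> V"
  unfolding nbhd_def using edge_vertices by blast

lemma not_in_nbhd: "x \<notin> nbhd x"
  unfolding nbhd_def using edge_vertices by blast

lemma in_nbhd_sym: "y \<in> nbhd x \<longleftrightarrow> x \<in> nbhd y"
  unfolding nbhd_def by (simp add: insert_commute)

lemma finite_nbhd: "finite (nbhd x)"
  using finite_V nbhd_subset_V finite_subset by blast

lemma edges_at_eq: "{f\<in>E. x \<in> f} = (\<lambda>y. {x, y}) ` nbhd x"
proof (intro equalityI subsetI)
  fix f
  assume f: "f \<in> {f\<in>E. x \<in> f}"
  then obtain u v where "f = {u, v}"
    by (auto elim: edgeE)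
  with f have "f = {x, if u = x then v else u}"
    by auto
  with f show "f \<in> (\<lambda>y. {x, y}) ` nbhd x"
    unfolding nbhd_def by auto
qed (auto simp: nbhd_def)

lemma degree_eq_card_nbhd: "degree E x = card (nbhd x)"
proof -
  have "inj_on (\<lambda>y. {x, y}) (nbhd x)"
    unfolding inj_on_def by (auto simp: doubleton_eq_iff)
  then show ?thesis
    unfolding degree_def edges_at_eq by (simp add: card_image)
qed

lemma card_other_edges_at:
  assumes "{x, y} \<in> E"
  shows "card {f\<in>E. x \<in> f \<and> f \<noteq> {x, y} \<and> P f} \<le> card (nbhd x) - 1"
proof -
  have "card {f\<in>E. x \<in> f \<and> f \<noteq> {x, y} \<and> P f} \<le> card ({f\<in>E. x \<in> f} - {{x, y}})"
    using finite_E by (intro card_mono) auto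
  also have "\<dots> = card (nbhd x) - 1"
    using assms finite_E degree_eq_card_nbhd[of x] unfolding degree_def by simp
  finally show ?thesis .
qed

lemma ex_edge_across_vertex_cut:
  assumes "c \<in> V" "T \<subseteq> V - {c}" "t \<in> T" "z \<in> V - {c} - T"
  shows "\<exists>x\<in>T. \<exists>y\<in>V - {c} - T. {x, y} \<in> E"
proof -
  have "(t, z) \<in> (adj_avoiding E {c} {})\<^sup>*"
    using assms by (intro reachable_without_vertex) auto
  then obtain a b where ab: "(a, b) \<in> adj_avoiding E {c} {}" "a \<in> T" "b \<notin> T"
    using rtrancl_leaves_set[of t z _ T] assms(3,4) by blast
  then have "{a, b} \<in> E" "b \<noteq> c"
    unfolding adj_avoiding_def by auto
  with ab show ?thesis
    using edge_vertices by blast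
qed

text \<open>Otherwise \<open>u\<close> would be a cut vertex.\<close>
lemma single_attachment_vertex:
  assumes "u \<in> T" "T \<subseteq> V" "z \<in> V - T"
    and "\<And>x y. x \<in> T \<Longrightarrow> y \<in> V - T \<Longrightarrow> {x, y} \<in> E \<Longrightarrow> x = u"
  shows "T = {u}"
proof (rule ccontr)
  assume "T \<noteq> {u}"
  then obtain t where "t \<in> T - {u}"
    using assms(1) by blast
  then obtain x y where "x \<in> T - {u}" "y \<in> V - {u} - (T - {u})" "{x, y} \<in> E"
    using ex_edge_across_vertex_cut[of u "T - {u}" t z] assms(1-3) by blast
  with assms(4) show False
    by auto
qed

lemma card_nbhd_ge_2:
  assumes "x \<in> V"
  shows "card (nbhd x) \<ge> 2"
proof (rule ccontr)
  assume "\<not> card (nbhd x) \<ge> 2"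
  then have le1: "card (nbhd x) \<le> Suc 0"
    by simp
  obtain c where c: "c \<in> V" "c \<noteq> x" "nbhd x \<subseteq> {c}"
  proof (cases "nbhd x = {}")
    case True
    then show ?thesis
      using ex_vertex_not_in_pair[of x x] that by blast
  next
    case False
    then obtain c where "c \<in> nbhd x"
      by blast
    moreover have "nbhd x \<subseteq> {c}"
      using le1 \<open>c \<in> nbhd x\<close> finite_nbhd card_le_Suc0_iff_eq by blast
    ultimately show ?thesis
      using that nbhd_subset_V not_in_nbhd by blast
  qed
  obtain z where z: "z \<in> V" "z \<noteq> c" "z \<noteq> x"
    using ex_vertex_not_in_pair by blast
  obtain y where "y \<in> V - {c} - {x}" "{x, y} \<in> E"
    using ex_edge_across_vertex_cut[of c "{x}" x z] assms c z by blast
  with c show False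
    unfolding nbhd_def by blast
qed

lemma card_nbhd_le_2_if_single_attachment:
  assumes "u \<in> T" "T \<subseteq> V" "z \<in> V - T"
    and "\<And>x y. x \<in> T \<Longrightarrow> y \<in> V - T \<Longrightarrow> {x, y} \<in> E \<Longrightarrow> x = u"
    and "nbhd u - T \<subseteq> {a, b}"
  shows "card (nbhd u) \<le> 2"
proof -
  have "T = {u}"
    using assms(1-4) by (rule single_attachment_vertex)
  then have "nbhd u \<subseteq> {a, b}"
    using assms(5) not_in_nbhd by auto
  then have "card (nbhd u) \<le> card {a, b}"
    by (intro card_mono) auto
  also have "\<dots> \<le> 2"
    by (cases "a = b") auto
  finally show ?thesis .
qed

definition component :: "'a set \<Rightarrow> 'a set \<Rightarrow> 'a \<Rightarrow> 'a set" where
  "component W f x = {y\<in>V. (x, y) \<in> (adj_avoiding E W f)\<^sup>*}"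

lemma component_closed:
  assumes "x \<in> component W f z" "x \<notin> W" "y \<notin> W" "{x, y} \<in> E" "{x, y} \<noteq> f"
  shows "y \<in> component W f z"
proof -
  have "(x, y) \<in> adj_avoiding E W f"
    using assms(2-5) unfolding adj_avoiding_def by simp
  with assms(1,4) show ?thesis
    unfolding component_def using edge_vertices by auto
qed

end

section \<open>Critical edges and bridge sides\<close>

locale min_two_connected_graph = two_connected_graph +
  assumes minimal: "\<And>e. e \<in> E \<Longrightarrow> \<not> two_connected V (E - {e})"
begin

lemma edge_critical:
  assumes "{u, v} \<in> E"
  obtains w where "w \<in> V" "w \<noteq> u" "w \<noteq> v" "(u, v) \<notin> (adj_avoiding E {w} {u, v})\<^sup>*"
proof -
  consider (disconnected) "\<not> connected_graph V (E - {{u, v}})"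
    | (cut) w where "w \<in> V" "\<not> connected_graph (V - {w}) {e\<in>E - {{u, v}}. w \<notin> e}"
  proof -
    have "\<not> two_connected V (E - {{u, v}})"
      by (rule minimal[OF assms])
    then have "\<not> connected_graph V (E - {{u, v}}) \<or>
        (\<exists>w\<in>V. \<not> connected_graph (V - {w}) {e\<in>E - {{u, v}}. w \<notin> e})"
      using card_V_gt_2 unfolding two_connected_def delete_vertex_def by simp
    then show thesis
      using that by blast
  qed
  then show ?thesis
  proof cases
    case disconnected
    have "adj_rel (E - {{u, v}}) = adj_avoiding E {} {u, v}"
      unfolding adj_rel_def adj_avoiding_def by auto
    moreover have "V \<noteq> {}"
      using card_V_gt_2 by auto
    ultimately obtain x y where xy: "x \<in> V" "y \<in> V" "(x, y) \<notin> (adj_avoiding E {} {u, v})\<^sup>*"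
      using disconnected unfolding connected_graph_def by auto
    obtain w where w: "w \<in> V" "w \<noteq> u" "w \<noteq> v"
      using ex_vertex_not_in_pair by blast
    have "(u, v) \<notin> (adj_avoiding E {} {u, v})\<^sup>*"
      using reachable_in_graph[OF xy(1,2)] xy(3) by (rule adj_avoiding_rtrancl_delete_edge)
    then have "(u, v) \<notin> (adj_avoiding E {w} {u, v})\<^sup>*"
      using adj_avoiding_rtrancl_mono[of "{}" "{w}"] by blast
    with w that show ?thesis
      by blast
  next
    case cut
    have "adj_rel {e\<in>E - {{u, v}}. w \<notin> e} = adj_avoiding E {w} {u, v}"
      unfolding adj_rel_def adj_avoiding_def by auto
    moreover have "V - {w} \<noteq> {}"
      using ex_vertex_not_in_pair[of w w] by blast
    ultimately obtain x y where xy: "x \<in> V - {w}" "y \<in> V - {w}"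
      "(x, y) \<notin> (adj_avoiding E {w} {u, v})\<^sup>*"
      using cut(2) unfolding connected_graph_def by auto
    have reach: "(x, y) \<in> (adj_avoiding E {w} {})\<^sup>*"
      using cut(1) xy(1,2) by (rule reachable_without_vertex)
    have "w \<noteq> u \<and> w \<noteq> v"
    proof (rule ccontr)
      assume "\<not> (w \<noteq> u \<and> w \<noteq> v)"
      then have "adj_avoiding E {w} {u, v} = adj_avoiding E {w} {}"
        unfolding adj_avoiding_def by (auto simp: doubleton_eq_iff)
      with xy(3) reach show False
        by simp
    qed
    moreover have "(u, v) \<notin> (adj_avoiding E {w} {u, v})\<^sup>*"
      using reach xy(3) by (rule adj_avoiding_rtrancl_delete_edge)
    ultimately show ?thesis
      using cut(1) that by blast
  qed
qed

text \<open>\<open>A\<close> is one side of the separation of \<open>G - w\<close> by its bridge \<open>{u, v}\<close>.\<close>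
definition bridge_side :: "'a \<Rightarrow> 'a \<Rightarrow> 'a \<Rightarrow> 'a set \<Rightarrow> bool" where
  "bridge_side u v w A \<longleftrightarrow> {u, v} \<in> E \<and> w \<in> V \<and> w \<noteq> u \<and> w \<noteq> v \<and> u \<in> A \<and> v \<notin> A \<and>
     A \<subseteq> V - {w} \<and> (\<forall>x\<in>A. \<forall>y\<in>V - {w} - A. {x, y} \<in> E \<longrightarrow> {x, y} = {u, v})"

lemma critical_edge_component:
  assumes "{u, v} \<in> E" "w \<in> V" "w \<noteq> u" "w \<noteq> v"
    and "(u, v) \<notin> (adj_avoiding E {w} {u, v})\<^sup>*"
  shows "bridge_side u v w (component {w} {u, v} u)"
    and "V - {w} - component {w} {u, v} u = component {w} {u, v} v"
proof -
  let ?R = "adj_avoiding E {w} {u, v}"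
  let ?A = "component {w} {u, v} u" and ?B = "component {w} {u, v} v"
  have uv: "u \<in> V" "v \<in> V"
    using edge_vertices assms(1) by auto
  have disjoint: "?A \<inter> ?B = {}"
  proof (rule ccontr)
    assume "?A \<inter> ?B \<noteq> {}"
    then obtain x where "(u, x) \<in> ?R\<^sup>*" "(v, x) \<in> ?R\<^sup>*"
      unfolding component_def by blast
    then have "(u, v) \<in> ?R\<^sup>*"
      using adj_avoiding_rtrancl_sym rtrancl_trans by metis
    with assms(5) show False ..
  qed
  have "w \<notin> ?A \<union> ?B"
    using adj_avoiding_rtrancl_outside[of _ _ E "{w}"] assms(3,4) unfolding component_def by blast
  moreover have "V - {w} \<subseteq> ?A \<union> ?B"
  proof
    fix x
    assume x: "x \<in> V - {w}"
    then have "(u, x) \<in> (adj_avoiding E {w} {})\<^sup>*"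
      using assms(2,3) uv by (intro reachable_without_vertex) auto
    then have "(u, x) \<in> ?R\<^sup>* \<or> (v, x) \<in> ?R\<^sup>*"
      using adj_avoiding_rtrancl_delete_edge_cases[of u x E "{w}" u v] by blast
    with x show "x \<in> ?A \<union> ?B"
      unfolding component_def by blast
  qed
  ultimately show complement: "V - {w} - ?A = ?B"
    using disjoint unfolding component_def by blast
  have "u \<in> ?A" "v \<in> ?B"
    using uv unfolding component_def by auto
  moreover have "{x, y} = {u, v}" if "x \<in> ?A" "y \<in> ?B" "{x, y} \<in> E" for x y
  proof (rule ccontr)
    assume "{x, y} \<noteq> {u, v}"
    moreover have "x \<noteq> w" "y \<noteq> w"
      using that(1,2) \<open>w \<notin> ?A \<union> ?B\<close> by auto
    ultimately have "y \<in> ?A"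
      using component_closed[OF that(1) _ _ that(3)] by blast
    with that(2) disjoint show False
      by blast
  qed
  ultimately show "bridge_side u v w ?A"
    unfolding bridge_side_def using assms(1-4) disjoint complement \<open>w \<notin> ?A \<union> ?B\<close>
    by (auto simp: component_def)
qed

lemma bridge_sideD:
  assumes "bridge_side u v w A"
  shows "{u, v} \<in> E" "w \<in> V" "w \<noteq> u" "w \<noteq> v" "u \<in> A" "v \<notin> A" "A \<subseteq> V - {w}"
  using assms unfolding bridge_side_def by blast+

lemma bridge_side_cross:
  assumes "bridge_side u v w A" "x \<in> A" "y \<in> V - {w} - A" "{x, y} \<in> E"
  shows "x = u" "y = v"
proof -
  have "{x, y} = {u, v}" "v \<notin> A"
    using assms unfolding bridge_side_def by blast+
  with assms(2,3) show "x = u" "y = v"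
    by (auto simp: doubleton_eq_iff)
qed

lemma critical_edge_component_sym:
  assumes "{u, v} \<in> E" "w \<in> V" "w \<noteq> u" "w \<noteq> v"
    and "(u, v) \<notin> (adj_avoiding E {w} {u, v})\<^sup>*"
  shows "bridge_side v u w (component {w} {u, v} v)"
proof -
  have "(v, u) \<notin> (adj_avoiding E {w} {v, u})\<^sup>*"
    using assms(5) adj_avoiding_rtrancl_sym by (metis insert_commute)
  then show ?thesis
    using critical_edge_component(1)[of v u w] assms(1-4) by (simp add: insert_commute)
qed

context
  fixes u v w A u'
  assumes side: "bridge_side u v w A"
    and edge: "{u, u'} \<in> E" and other: "u' \<noteq> v"
begin

lemma other_neighbour_cases: "u' \<in> A \<or> u' = w"
  using bridge_side_cross(2)[OF side bridge_sideD(5)[OF side] _ edge] edge_vertices(2)[OF edge] other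
  by blast

context
  fixes w1
  assumes crit: "w1 \<in> V" "w1 \<noteq> u" "w1 \<noteq> u'" "(u, u') \<notin> (adj_avoiding E {w1} {u, u'})\<^sup>*"
begin

lemma other_side_subset_component:
  assumes "w1 \<notin> V - {w} - A"
  shows "V - {w} - A \<subseteq> component {w1} {u, u'} u"
proof (rule ccontr)
  let ?A1 = "component {w1} {u, u'} u" and ?B1 = "component {w1} {u, u'} u'"
  note side1 = critical_edge_component[OF edge crit]
  note sideD = bridge_sideD[OF side] and side1D = bridge_sideD[OF side1(1)]
  have "v \<in> ?A1"
  proof (rule component_closed[OF side1D(5)])
    show "v \<notin> {w1}"
      using assms sideD edge_vertices(2) by blast
    show "{u, v} \<noteq> {u, u'}"
      using other by (auto simp: doubleton_eq_iff)
  qed (use crit sideD in auto)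
  assume "\<not> V - {w} - A \<subseteq> ?A1"
  then obtain t where t: "t \<in> V - {w} - A" "t \<notin> ?A1"
    by blast
  let ?T = "(V - {w} - A) \<inter> ?B1"
  have "t \<in> ?T"
    using t assms side1(2) by blast
  then obtain x y where xy: "x \<in> ?T" "y \<in> V - {w} - ?T" "{x, y} \<in> E"
    using ex_edge_across_vertex_cut[of w ?T t u] sideD by blast
  show False
  proof (cases "y \<in> A")
    case True
    then have "x = v"
      using bridge_side_cross(2)[OF side True _ ] xy by (simp add: insert_commute)
    with xy(1) \<open>v \<in> ?A1\<close> side1(2) show False
      by blast
  next
    case False
    then have "y \<in> ?A1"
      using xy(2) assms side1(2) by blast
    then have "x = u'"
      using bridge_side_cross(2)[OF side1(1) _ _ ] xy side1(2) by (simp add: insert_commute)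
    with xy(1) other_neighbour_cases show False
      by blast
  qed
qed

lemma descent_if_cut_vertex_outside:
  assumes "w1 \<notin> V - {w} - A"
  shows "card (component {w1} {u, u'} u') < card A"
proof -
  let ?B1 = "component {w1} {u, u'} u'"
  note side1 = critical_edge_component[OF edge crit]
  note sideD = bridge_sideD[OF side] and side1D = bridge_sideD[OF side1(1)]
  have finite_A: "finite A"
    using sideD(7) finite_V finite_subset by blast
  have B1_subset: "?B1 \<subseteq> (A - {u, w1}) \<union> ({w} - {w1})"
    using other_side_subset_component[OF assms] side1(2) side1D(5) by blast
  show ?thesis
  proof (cases "w1 = w")
    case True
    then have "?B1 \<subseteq> A - {u}"
      using B1_subset by blast
    then have "card ?B1 \<le> card (A - {u})"
      using finite_A by (intro card_mono) auto
    also have "\<dots> < card A"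
      using finite_A sideD(5) by (rule card_Diff1_less)
    finally show ?thesis .
  next
    case False
    then have w1_A: "w1 \<in> A"
      using assms crit(1) by blast
    have "card ?B1 \<le> card ((A - {u, w1}) \<union> ({w} - {w1}))"
      using finite_A B1_subset by (intro card_mono) auto
    also have "\<dots> \<le> card (A - {u, w1}) + card ({w} - {w1})"
      by (rule card_Un_le)
    also have "\<dots> = card A - 2 + 1"
      using finite_A sideD(5) w1_A crit(2) False by (simp add: card_Diff_subset)
    also have "\<dots> < card A"
    proof -
      have "card {u, w1} \<le> card A"
        using finite_A sideD(5) w1_A by (intro card_mono) auto
      then show ?thesis
        using crit(2) by simp
    qed
    finally show ?thesis .
  qed
qed

lemma component_endpoint:
  assumes "y0 \<in> {u, u'}" "u \<in> component {w1} {u, u'} y0"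
  shows "y0 = u" "u' \<notin> component {w1} {u, u'} y0"
proof -
  show "y0 = u"
  proof (rule ccontr)
    assume "y0 \<noteq> u"
    with assms have "(u', u) \<in> (adj_avoiding E {w1} {u, u'})\<^sup>*"
      unfolding component_def by auto
    then have "(u, u') \<in> (adj_avoiding E {w1} {u, u'})\<^sup>*"
      by (rule adj_avoiding_rtrancl_sym)
    with crit(4) show False ..
  qed
  with crit(4) show "u' \<notin> component {w1} {u, u'} y0"
    unfolding component_def by blast
qed

context
  fixes y0
  assumes y0: "y0 \<in> {u, u'}" "w \<notin> component {w1} {u, u'} y0"
begin

lemma component_leaves_side_through_u:
  assumes "\<not> component {w1} {u, u'} y0 \<subseteq> A"
  shows "u \<in> component {w1} {u, u'} y0"
proof -
  let ?Y = "component {w1} {u, u'} y0" and ?R = "adj_avoiding E {w1} {u, u'}"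
  note sideD = bridge_sideD[OF side]
  obtain b where b: "b \<in> ?Y" "b \<notin> A"
    using assms by blast
  have y0_V: "y0 \<in> V"
    using y0(1) edge_vertices[OF edge] by blast
  then have "y0 \<in> ?Y"
    unfolding component_def by simp
  then have "y0 \<in> A"
    using y0 other_neighbour_cases sideD(5) by blast
  from b have "(y0, b) \<in> ?R\<^sup>*"
    unfolding component_def by simp
  then obtain a b' where ab': "(y0, a) \<in> ?R\<^sup>*" "(a, b') \<in> ?R" "a \<in> A" "b' \<notin> A"
    using rtrancl_leaves_set[of y0 b ?R A] \<open>y0 \<in> A\<close> b(2) by blast
  then have "{a, b'} \<in> E"
    unfolding adj_avoiding_def by simp
  moreover have "(y0, b') \<in> ?R\<^sup>*"
    using ab'(1,2) by (rule rtrancl_into_rtrancl)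
  ultimately have "b' \<in> ?Y"
    unfolding component_def using edge_vertices by auto
  with y0(2) ab'(4) have "b' \<in> V - {w} - A"
    unfolding component_def by blast
  then have "a = u"
    using bridge_side_cross(1)[OF side ab'(3)] \<open>{a, b'} \<in> E\<close> by blast
  with ab'(1) sideD show ?thesis
    unfolding component_def by auto
qed

lemma component_subset_side:
  assumes w1: "w1 \<in> V - {w} - A" and deg: "card (nbhd u) \<ge> 3"
  shows "component {w1} {u, u'} y0 \<subseteq> A"
proof (rule ccontr)
  let ?Y = "component {w1} {u, u'} y0"
  note sideD = bridge_sideD[OF side]
  assume "\<not> ?Y \<subseteq> A"
  then have "u \<in> ?Y"
    by (rule component_leaves_side_through_u)
  note endpoint = component_endpoint[OF y0(1) this]
  have w1_not_A: "w1 \<notin> A"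
    using w1 by blast
  have "card (nbhd u) \<le> 2"
  proof (rule card_nbhd_le_2_if_single_attachment)
    show "u \<in> A \<inter> ?Y" "A \<inter> ?Y \<subseteq> V" "w \<in> V - A \<inter> ?Y"
      using sideD \<open>u \<in> ?Y\<close> by auto
    show "x = u" if "x \<in> A \<inter> ?Y" "y \<in> V - A \<inter> ?Y" "{x, y} \<in> E" for x y
    proof (cases "y \<in> V - {w} - A")
      case True
      with that show ?thesis
        using bridge_side_cross(1)[OF side] by blast
    next
      case False
      then have "y \<notin> ?Y" "y \<noteq> w1"
        using that(2) y0(2) w1 by auto
      then have "{x, y} = {u, u'}"
        using component_closed[of x "{w1}" "{u, u'}" y0 y] that w1_not_A by blast
      with that(1) endpoint(2) show ?thesis
        by (auto simp: doubleton_eq_iff)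
    qed
    show "nbhd u - A \<inter> ?Y \<subseteq> {v, u'}"
    proof
      fix y
      assume y: "y \<in> nbhd u - A \<inter> ?Y"
      then have "{u, y} \<in> E" "y \<in> V"
        unfolding nbhd_def using edge_vertices by auto
      show "y \<in> {v, u'}"
      proof (cases "y \<in> V - {w} - A")
        case True
        then show ?thesis
          using bridge_side_cross(2)[OF side sideD(5)] \<open>{u, y} \<in> E\<close> by blast
      next
        case False
        then have "y \<notin> ?Y" "y \<noteq> w1"
          using y y0(2) w1 \<open>y \<in> V\<close> by auto
        then have "{u, y} = {u, u'}"
          using component_closed[OF \<open>u \<in> ?Y\<close> _ _ \<open>{u, y} \<in> E\<close>] crit(2) by blast
        then show ?thesis
          by (auto simp: doubleton_eq_iff)
      qed
    qed
  qed
  with deg show False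
    by simp
qed

lemma component_ne_side:
  assumes w1: "w1 \<in> V - {w} - A" and deg: "card (nbhd u) \<ge> 3"
  shows "component {w1} {u, u'} y0 \<noteq> A"
proof
  let ?Y = "component {w1} {u, u'} y0"
  note sideD = bridge_sideD[OF side]
  assume Y_A: "?Y = A"
  with sideD(5) have "u \<in> ?Y"
    by simp
  note endpoint = component_endpoint[OF y0(1) this]
  with Y_A other_neighbour_cases have "u' = w"
    by blast
  have "card (nbhd u) \<le> 2"
  proof (rule card_nbhd_le_2_if_single_attachment)
    show "u \<in> A" "A \<subseteq> V" "w \<in> V - A"
      using sideD by auto
    show "x = u" if "x \<in> A" "y \<in> V - A" "{x, y} \<in> E" for x y
    proof (cases "y = w")
      case True
      have "y \<notin> ?Y" "y \<noteq> w1" "x \<noteq> w1"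
        using True y0(2) w1 that(1) by auto
      then have "{x, y} = {u, u'}"
        using component_closed[of x "{w1}" "{u, u'}" y0 y] that(1,3) Y_A by blast
      with True \<open>u' = w\<close> sideD(3) show ?thesis
        by (auto simp: doubleton_eq_iff)
    next
      case False
      with that show ?thesis
        using bridge_side_cross(1)[OF side] by blast
    qed
    show "nbhd u - A \<subseteq> {v, w}"
      using bridge_side_cross(2)[OF side sideD(5)] nbhd_subset_V unfolding nbhd_def by blast
  qed
  with deg show False
    by simp
qed

end

lemma descent_if_cut_vertex_inside:
  assumes "w1 \<in> V - {w} - A" and "card (nbhd u) \<ge> 3"
  shows "\<exists>Y. (bridge_side u u' w1 Y \<or> bridge_side u' u w1 Y) \<and> card Y < card A"
proof -
  note side1 = critical_edge_component[OF edge crit] critical_edge_component_sym[OF edge crit]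
  obtain y0 where y0: "y0 \<in> {u, u'}" "w \<notin> component {w1} {u, u'} y0"
    and side_y0: "bridge_side u u' w1 (component {w1} {u, u'} y0) \<or>
      bridge_side u' u w1 (component {w1} {u, u'} y0)"
  proof (cases "w \<in> component {w1} {u, u'} u")
    case True
    then show ?thesis
      using that[of u'] side1 by blast
  next
    case False
    then show ?thesis
      using that[of u] side1 by blast
  qed
  have "component {w1} {u, u'} y0 \<subset> A"
    using component_subset_side[OF y0 assms] component_ne_side[OF y0 assms] by blast
  moreover have "finite A"
    using bridge_sideD(7)[OF side] finite_V finite_subset by blast
  ultimately show ?thesis
    using side_y0 psubset_card_mono by blast
qed

end

lemma bridge_side_descent:
  assumes "card (nbhd u) \<ge> 3"
  shows "\<exists>w' A'. (bridge_side u u' w' A' \<or> bridge_side u' u w' A') \<and> card A' < card A"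
proof -
  obtain w1 where crit: "w1 \<in> V" "w1 \<noteq> u" "w1 \<noteq> u'"
    "(u, u') \<notin> (adj_avoiding E {w1} {u, u'})\<^sup>*"
    using edge_critical[OF edge] by blast
  show ?thesis
  proof (cases "w1 \<in> V - {w} - A")
    case True
    then show ?thesis
      using descent_if_cut_vertex_inside[OF crit True assms] by blast
  next
    case False
    then show ?thesis
      using descent_if_cut_vertex_outside[OF crit False] critical_edge_component_sym[OF edge crit]
      by blast
  qed
qed

end

subsection \<open>Branch vertices induce a forest\<close>

definition branch_vertices :: "'a set" where
  "branch_vertices = {x\<in>V. card (nbhd x) \<ge> 3}"

lemma finite_branch_vertices: "finite branch_vertices"
  using finite_V unfolding branch_vertices_def by simp

text \<open>A counterexample \<open>X\<close> would contain the ends of the bridge of some bridge side, and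
  \<open>bridge_side_descent\<close> shrinks any such side while keeping both ends in \<open>X\<close>.\<close>
lemma branch_vertices_degenerate:
  assumes "X \<subseteq> branch_vertices" "X \<noteq> {}"
  shows "\<exists>x\<in>X. card (nbhd x \<inter> X) \<le> 1"
proof (rule ccontr)
  assume "\<not> ?thesis"
  then have other: "\<exists>y \<in> nbhd x \<inter> X. y \<noteq> z" if "x \<in> X" for x z
    using that card_mono[of "{z}" "nbhd x \<inter> X"] by fastforce
  have deg: "card (nbhd x) \<ge> 3" if "x \<in> X" for x
    using assms(1) that unfolding branch_vertices_def by blast
  have no_side: "\<not> (u \<in> X \<and> v \<in> X \<and> bridge_side u v w A)" for u v w A
  proof (induction "card A" arbitrary: u v w A rule: less_induct)
    case less
    show ?case
    proof
      assume uvA: "u \<in> X \<and> v \<in> X \<and> bridge_side u v w A"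
      then obtain u' where u': "u' \<in> nbhd u \<inter> X" "u' \<noteq> v"
        using other by blast
      then have "{u, u'} \<in> E"
        unfolding nbhd_def by simp
      then obtain w' A' where "bridge_side u u' w' A' \<or> bridge_side u' u w' A'" "card A' < card A"
        using bridge_side_descent[of u v w A u'] uvA u'(2) deg by blast
      with less.hyps u'(1) uvA show False
        by blast
    qed
  qed
  obtain x where x: "x \<in> X"
    using assms(2) by blast
  then obtain y where y: "y \<in> nbhd x \<inter> X"
    using other by blast
  then have edge: "{x, y} \<in> E"
    unfolding nbhd_def by simp
  then obtain w where "w \<in> V" "w \<noteq> x" "w \<noteq> y" "(x, y) \<notin> (adj_avoiding E {w} {x, y})\<^sup>*"
    by (rule edge_critical)
  then have "bridge_side x y w (component {w} {x, y} x)"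
    by (intro critical_edge_component(1)[OF edge])
  with no_side x y show False
    by blast
qed

end

section \<open>Counting earlier conflicts\<close>

locale branch_ordered_graph = min_two_connected_graph +
  fixes idx :: "'a \<Rightarrow> nat"
  assumes inj_idx: "inj_on idx branch_vertices"
    and idx_less: "idx ` branch_vertices \<subseteq> {..<card branch_vertices}"
    and earlier_nbhd:
      "\<And>x. x \<in> branch_vertices \<Longrightarrow> card {y \<in> nbhd x \<inter> branch_vertices. idx y < idx x} \<le> 1"
begin

abbreviation \<Delta> :: nat where
  "\<Delta> \<equiv> max_degree V E"

text \<open>Vertices of degree 2 are ranked after all branch vertices.\<close>
definition vrank :: "'a \<Rightarrow> nat" where
  "vrank x = (if x \<in> branch_vertices then idx x else card V)"

definition erank :: "'a set \<Rightarrow> nat" where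
  "erank f = Min (vrank ` f)"

definition low_edges :: "'a \<Rightarrow> 'a \<Rightarrow> nat \<Rightarrow> 'a set set" where
  "low_edges x y \<rho> = {f\<in>E. x \<in> f \<and> f \<noteq> {x, y} \<and> erank f \<le> \<rho>}"

text \<open>Candidates for conflicts of rank at most \<open>\<rho>\<close> with \<open>{a, b}\<close> that arise at the endpoint \<open>a\<close>.\<close>
definition conflicts_at :: "'a \<Rightarrow> 'a \<Rightarrow> nat \<Rightarrow> 'a set set" where
  "conflicts_at a b \<rho> = low_edges a b \<rho> \<union> (\<Union>x\<in>nbhd a - {b}. low_edges x a \<rho>)"

lemma idx_less_card_V:
  assumes "x \<in> branch_vertices"
  shows "idx x < card V"
proof -
  have "card branch_vertices \<le> card V"
    using finite_V unfolding branch_vertices_def by (intro card_mono) auto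
  with assms show ?thesis
    using idx_less by fastforce
qed

lemma erank_edge: "erank {x, y} = min (vrank x) (vrank y)"
  unfolding erank_def by simp

lemma card_nbhd_le_Delta:
  assumes "x \<in> V"
  shows "card (nbhd x) \<le> \<Delta>"
  using finite_V assms unfolding max_degree_def degree_eq_card_nbhd[symmetric] by simp

lemma Delta_ge_2: "\<Delta> \<ge> 2"
proof -
  obtain x where "x \<in> V"
    using card_V_gt_2 by fastforce
  then show ?thesis
    using card_nbhd_ge_2 card_nbhd_le_Delta order_trans by blast
qed

lemma card_nbhd_non_branch: "x \<in> V \<Longrightarrow> x \<notin> branch_vertices \<Longrightarrow> card (nbhd x) \<le> 2"
  unfolding branch_vertices_def by auto

lemma card_low_edges:
  assumes "y \<in> nbhd x"
  shows "card (low_edges x y \<rho>) \<le> card (nbhd x) - 1"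
proof -
  from assms have "{x, y} \<in> E"
    unfolding nbhd_def by simp
  then show ?thesis
    unfolding low_edges_def by (rule card_other_edges_at)
qed

lemma earlier_nbhd_unique:
  assumes "x \<in> branch_vertices" "y \<in> nbhd x \<inter> branch_vertices" "z \<in> nbhd x \<inter> branch_vertices"
    and "idx y < idx x" "idx z < idx x"
  shows "y = z"
proof -
  have "y \<in> {y \<in> nbhd x \<inter> branch_vertices. idx y < idx x}"
    "z \<in> {y \<in> nbhd x \<inter> branch_vertices. idx y < idx x}"
    using assms by auto
  then show ?thesis
    using earlier_nbhd[OF assms(1)] finite_nbhd
      card_le_Suc0_iff_eq[of "{y \<in> nbhd x \<inter> branch_vertices. idx y < idx x}"]
    by auto
qed

lemma low_edge_at_branch_vertex:
  assumes x: "x \<in> branch_vertices" and z: "z \<in> nbhd x \<inter> branch_vertices" "idx z < idx x"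
    and "\<rho> < idx x" and f: "f \<in> E" "x \<in> f" "erank f \<le> \<rho>"
  shows "f = {x, z}"
proof -
  obtain y where y: "y \<in> nbhd x" "f = {x, y}"
    using edges_at_eq f(1,2) by blast
  have "min (vrank x) (vrank y) \<le> \<rho>"
    using f(3) y(2) erank_edge by simp
  moreover have "vrank x = idx x"
    using x unfolding vrank_def by simp
  ultimately have vrank_y: "vrank y \<le> \<rho>"
    using assms(4) by linarith
  have y_branch: "y \<in> branch_vertices"
    using vrank_y assms(4) idx_less_card_V[OF x] unfolding vrank_def by (auto split: if_splits)
  with vrank_y assms(4) have "idx y < idx x"
    unfolding vrank_def by simp
  with x y(1) y_branch z have "y = z"
    using earlier_nbhd_unique by blast
  with y(2) show ?thesis
    by simp
qed

lemma low_edges_later_nbhd: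
  assumes "a \<in> branch_vertices" "x \<in> nbhd a \<inter> branch_vertices" "idx a < idx x" "\<rho> < idx x"
  shows "low_edges x a \<rho> = {}"
proof -
  have "a \<in> nbhd x \<inter> branch_vertices"
    using assms(1,2) in_nbhd_sym by blast
  then have "f = {x, a}" if "f \<in> low_edges x a \<rho>" for f
    using low_edge_at_branch_vertex[of x a \<rho> f] assms that unfolding low_edges_def by blast
  then show ?thesis
    unfolding low_edges_def by blast
qed

lemma card_conflicts_at:
  "card (conflicts_at a b \<rho>) \<le> card (low_edges a b \<rho>) + (\<Sum>x\<in>nbhd a - {b}. card (low_edges x a \<rho>))"
proof -
  have "card (conflicts_at a b \<rho>) \<le> card (low_edges a b \<rho>) + card (\<Union>x\<in>nbhd a - {b}. low_edges x a \<rho>)"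
    unfolding conflicts_at_def by (rule card_Un_le)
  also have "card (\<Union>x\<in>nbhd a - {b}. low_edges x a \<rho>) \<le> (\<Sum>x\<in>nbhd a - {b}. card (low_edges x a \<rho>))"
    using finite_nbhd by (intro card_UN_le) simp
  finally show ?thesis
    by simp
qed

lemma low_conflicts_subset:
  assumes "{a, b} \<in> E"
  shows "{f\<in>E. strongly_conflicting E {a, b} f \<and> erank f \<le> \<rho>} \<subseteq> conflicts_at a b \<rho> \<union> conflicts_at b a \<rho>"
proof
  fix f
  assume "f \<in> {f\<in>E. strongly_conflicting E {a, b} f \<and> erank f \<le> \<rho>}"
  then have f: "f \<in> E" "f \<noteq> {a, b}" "f \<noteq> {b, a}" "erank f \<le> \<rho>"
    and touch: "a \<in> f \<or> b \<in> f \<or> (\<exists>u\<in>{a, b}. \<exists>v\<in>f. {u, v} \<in> E)"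
    unfolding strongly_conflicting_def by (auto simp: insert_commute)
  show "f \<in> conflicts_at a b \<rho> \<union> conflicts_at b a \<rho>"
  proof (cases "a \<in> f \<or> b \<in> f")
    case True
    with f show ?thesis
      unfolding conflicts_at_def low_edges_def by blast
  next
    case False
    with touch obtain u v where uv: "u \<in> {a, b}" "v \<in> f" "{u, v} \<in> E"
      by blast
    with False have "v \<in> nbhd u - {a, b}" "u \<notin> f"
      unfolding nbhd_def by auto
    with uv f show ?thesis
      unfolding conflicts_at_def low_edges_def by (auto simp: insert_commute)
  qed
qed

lemma card_conflicts_at_non_branch:
  assumes "a \<in> V" "a \<notin> branch_vertices" "b \<in> nbhd a"
  shows "card (conflicts_at a b \<rho>) \<le> \<Delta>"
proof -
  have deg_a: "card (nbhd a) \<le> 2"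
    using assms(1,2) by (rule card_nbhd_non_branch)
  have "card (low_edges a b \<rho>) \<le> 1"
    using card_low_edges[OF assms(3), of \<rho>] deg_a by linarith
  moreover have "(\<Sum>x\<in>nbhd a - {b}. card (low_edges x a \<rho>)) \<le> (\<Sum>x\<in>nbhd a - {b}. \<Delta> - 1)"
  proof (rule sum_mono)
    fix x
    assume x: "x \<in> nbhd a - {b}"
    then have "card (low_edges x a \<rho>) \<le> card (nbhd x) - 1"
      using card_low_edges in_nbhd_sym by blast
    also have "\<dots> \<le> \<Delta> - 1"
      using card_nbhd_le_Delta nbhd_subset_V x by (meson Diff_iff diff_le_mono subsetD)
    finally show "card (low_edges x a \<rho>) \<le> \<Delta> - 1" .
  qed
  moreover have "card (nbhd a - {b}) \<le> 1"
    using deg_a assms(3) finite_nbhd by simp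
  then have "(\<Sum>x\<in>nbhd a - {b}. \<Delta> - 1) \<le> \<Delta> - 1"
    using mult_le_mono1[of "card (nbhd a - {b})" 1 "\<Delta> - 1"] by simp
  ultimately show ?thesis
    using card_conflicts_at[of a b \<rho>] Delta_ge_2 by linarith
qed

lemma card_low_edges_at_nbhd:
  assumes a: "a \<in> branch_vertices" and x: "x \<in> nbhd a"
  shows "card (low_edges x a (idx a)) \<le> 1 + (if x \<in> branch_vertices \<and> idx x < idx a then \<Delta> - 2 else 0)"
proof -
  have x_V: "x \<in> V" and a_x: "a \<in> nbhd x"
    using x nbhd_subset_V in_nbhd_sym by auto
  have bound: "card (low_edges x a (idx a)) \<le> card (nbhd x) - 1"
    using a_x by (rule card_low_edges)
  consider "x \<in> branch_vertices" "idx x < idx a" | "x \<in> branch_vertices" "\<not> idx x < idx a"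
    | "x \<notin> branch_vertices"
    by blast
  then show ?thesis
  proof cases
    case 1
    then show ?thesis
      using bound card_nbhd_le_Delta[OF x_V] by simp
  next
    case 2
    moreover have "x \<noteq> a"
      using x not_in_nbhd by blast
    ultimately have "idx a < idx x"
      using inj_idx a unfolding inj_on_def by fastforce
    then have "low_edges x a (idx a) = {}"
      using a x 2(1) by (intro low_edges_later_nbhd) auto
    then show ?thesis
      by simp
  next
    case 3
    then show ?thesis
      using bound card_nbhd_non_branch[OF x_V] by simp
  qed
qed

lemma card_conflicts_at_own_rank:
  assumes a: "a \<in> branch_vertices" and b: "b \<in> nbhd a"
  shows "card (conflicts_at a b (idx a)) \<le> 3 * \<Delta> - 4"
proof -
  let ?P = "{y. y \<in> branch_vertices \<and> idx y < idx a}" and ?N = "nbhd a - {b}"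
  have a_V: "a \<in> V"
    using a unfolding branch_vertices_def by blast
  have card_N: "card ?N \<le> \<Delta> - 1"
    using b card_nbhd_le_Delta[OF a_V] finite_nbhd by simp
  have "card (?N \<inter> ?P) \<le> 1"
    using earlier_nbhd[OF a] card_mono[of "{y \<in> nbhd a \<inter> branch_vertices. idx y < idx a}" "?N \<inter> ?P"]
      finite_nbhd by fastforce
  then have card_NP: "card (?N \<inter> ?P) * (\<Delta> - 2) \<le> \<Delta> - 2"
    using mult_le_mono1[of "card (?N \<inter> ?P)" 1 "\<Delta> - 2"] by simp
  have "(\<Sum>x\<in>?N. card (low_edges x a (idx a))) \<le> (\<Sum>x\<in>?N. 1 + (if x \<in> ?P then \<Delta> - 2 else 0))"
    using card_low_edges_at_nbhd[OF a] by (intro sum_mono) simp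
  also have "\<dots> = card ?N + (\<Sum>x\<in>?N. if x \<in> ?P then \<Delta> - 2 else 0)"
    unfolding sum.distrib by simp
  also have "(\<Sum>x\<in>?N. if x \<in> ?P then \<Delta> - 2 else 0) = card (?N \<inter> ?P) * (\<Delta> - 2)"
    using sum.inter_restrict[of ?N "\<lambda>_. \<Delta> - 2" ?P] finite_nbhd by simp
  finally have "(\<Sum>x\<in>?N. card (low_edges x a (idx a))) \<le> 2 * \<Delta> - 3"
    using card_N card_NP Delta_ge_2 by linarith
  moreover have "card (low_edges a b (idx a)) \<le> \<Delta> - 1"
    using card_low_edges[OF b, of "idx a"] card_nbhd_le_Delta[OF a_V] by linarith
  ultimately show ?thesis
    using card_conflicts_at[of a b "idx a"] Delta_ge_2 by linarith
qed

lemma card_conflicts_at_earlier_rank: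
  assumes a: "a \<in> branch_vertices" and b: "b \<in> nbhd a \<inter> branch_vertices" "idx b < idx a"
  shows "card (conflicts_at a b (idx b)) \<le> \<Delta> - 1"
proof -
  let ?N = "nbhd a - {b}"
  have a_V: "a \<in> V"
    using a unfolding branch_vertices_def by blast
  have "low_edges a b (idx b) = {}"
    using low_edge_at_branch_vertex[OF a b b(2)] unfolding low_edges_def by blast
  moreover have "(\<Sum>x\<in>?N. card (low_edges x a (idx b))) \<le> (\<Sum>x\<in>?N. 1)"
  proof (rule sum_mono)
    fix x
    assume x: "x \<in> ?N"
    have x_V: "x \<in> V" and a_x: "a \<in> nbhd x"
      using x nbhd_subset_V in_nbhd_sym by auto
    show "card (low_edges x a (idx b)) \<le> 1"
    proof (cases "x \<in> branch_vertices")
      case False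
      then show ?thesis
        using card_low_edges[OF a_x, of "idx b"] card_nbhd_non_branch[OF x_V] by simp
    next
      case True
      have "idx x \<noteq> idx a"
        using inj_idx a True x not_in_nbhd unfolding inj_on_def by blast
      moreover have "\<not> idx x < idx a"
        using earlier_nbhd_unique[OF a, of x b] True x b by blast
      ultimately have "low_edges x a (idx b) = {}"
        using a x True b(2) by (intro low_edges_later_nbhd) auto
      then show ?thesis
        by simp
    qed
  qed
  moreover have "card ?N \<le> \<Delta> - 1"
    using b card_nbhd_le_Delta[OF a_V] finite_nbhd by simp
  ultimately show ?thesis
    using card_conflicts_at[of a b "idx b"] by simp
qed

lemma card_conflicts_at_both_ends:
  assumes edge: "{a, b} \<in> E" and ord: "vrank a \<le> vrank b"
  shows "card (conflicts_at a b (vrank a)) + card (conflicts_at b a (vrank a)) \<le> 4 * \<Delta> - 4"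
proof -
  have ab: "a \<in> V" "b \<in> V" "a \<noteq> b"
    using edge_vertices[OF edge] by auto
  have b_a: "b \<in> nbhd a" and a_b: "a \<in> nbhd b"
    using edge unfolding nbhd_def by (auto simp: insert_commute)
  show ?thesis
  proof (cases "a \<in> branch_vertices")
    case False
    then have "b \<notin> branch_vertices"
      using ord idx_less_card_V unfolding vrank_def by fastforce
    with ab(2) a_b have "card (conflicts_at b a (vrank a)) \<le> \<Delta>"
      by (intro card_conflicts_at_non_branch)
    moreover have "card (conflicts_at a b (vrank a)) \<le> \<Delta>"
      using ab(1) False b_a by (rule card_conflicts_at_non_branch)
    ultimately show ?thesis
      using Delta_ge_2 by linarith
  next
    case a: True
    then have "vrank a = idx a"
      unfolding vrank_def by simp
    moreover have "card (conflicts_at a b (idx a)) \<le> 3 * \<Delta> - 4"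
      using a b_a by (rule card_conflicts_at_own_rank)
    moreover have "card (conflicts_at b a (idx a)) \<le> \<Delta>"
    proof (cases "b \<in> branch_vertices")
      case False
      with ab(2) a_b show ?thesis
        by (intro card_conflicts_at_non_branch)
    next
      case True
      with a ab(3) ord inj_idx have "idx a < idx b"
        unfolding vrank_def inj_on_def by fastforce
      then show ?thesis
        using card_conflicts_at_earlier_rank[OF True, of a] a a_b by simp
    qed
    ultimately show ?thesis
      using Delta_ge_2 by simp
  qed
qed

lemma card_low_conflicts:
  assumes e: "e \<in> E"
  shows "card {f\<in>E. strongly_conflicting E e f \<and> erank f \<le> erank e} \<le> 4 * \<Delta> - 4"
proof -
  obtain a b where ab: "e = {a, b}" "vrank a \<le> vrank b"
    using e by (elim edgeE) (metis insert_commute nle_le)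
  with e have edge: "{a, b} \<in> E"
    by simp
  have "erank e = vrank a"
    using ab erank_edge by simp
  then have "{f\<in>E. strongly_conflicting E e f \<and> erank f \<le> erank e}
      \<subseteq> conflicts_at a b (vrank a) \<union> conflicts_at b a (vrank a)"
    using ab(1) low_conflicts_subset[OF edge] by simp
  moreover have "conflicts_at a b (vrank a) \<union> conflicts_at b a (vrank a) \<subseteq> E"
    unfolding conflicts_at_def low_edges_def by blast
  ultimately have "card {f\<in>E. strongly_conflicting E e f \<and> erank f \<le> erank e}
      \<le> card (conflicts_at a b (vrank a) \<union> conflicts_at b a (vrank a))"
    using finite_E finite_subset by (intro card_mono) blast+
  also have "\<dots> \<le> card (conflicts_at a b (vrank a)) + card (conflicts_at b a (vrank a))"
    by (rule card_Un_le)
  also have "\<dots> \<le> 4 * \<Delta> - 4"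
    using edge ab(2) by (rule card_conflicts_at_both_ends)
  finally show ?thesis .
qed

end

theorem corollary5:
  fixes V :: "'a set" and E :: "'a set set"
  assumes "simple_graph V E"
    and "minimally_two_connected V E"
  shows "strong_chromatic_index E \<le> 4 * max_degree V E - 3"
proof -
  interpret min_two_connected_graph V E
    using assms unfolding minimally_two_connected_def by unfold_locales auto
  obtain idx :: "'a \<Rightarrow> nat" where "inj_on idx branch_vertices"
    "idx ` branch_vertices \<subseteq> {..<card branch_vertices}"
    "\<forall>x\<in>branch_vertices. card {y \<in> nbhd x \<inter> branch_vertices. idx y < idx x} \<le> 1"
    using degenerate_ordering[OF finite_branch_vertices branch_vertices_degenerate] by blast
  then interpret branch_ordered_graph V E idx
    by unfold_locales auto
  obtain c where "\<forall>e\<in>E. \<forall>f\<in>E. strongly_conflicting E e f \<longrightarrow> c e \<noteq> c f"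
    "c ` E \<subseteq> {..<Suc (4 * \<Delta> - 4)}"
    using greedy_coloring_by_rank[OF finite_E strongly_conflicting_sym _ card_low_conflicts]
    by (auto simp: strongly_conflicting_def)
  then have "strong_chromatic_index E \<le> Suc (4 * \<Delta> - 4)"
    by (intro strong_chromatic_index_le) (auto simp: strong_edge_coloring_iff)
  with Delta_ge_2 show ?thesis
    by simp
qed

end
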